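(* Let $(X,\operatorname{d})$ be a bounded, complete metric space with a convex-like structure, and let $\mathfrak F=\{x_1,\dots,x_n\}\subset X$ be finite. Then $\operatorname{plane}(\mathfrak F)$ is $\sigma$-compact (hence separable).
   Context: Let $\operatorname{Prob}_n$ denote the set of probability measures on $\{1,\dots,n\}$ with the $\ell^1$-metric, and $X^{(n)}$ the $n$-fold product. A bounded metric space $(X,\operatorname{d})$ has a \emph{convex-like structure} if for every $n$ and $\mu\in\operatorname{Prob}_n$ there is a continuous map $\gamma_\mu\colon X^{(n)}\to X$ satisfying: (1) $\gamma_\mu(x_1,\dots,x_n)=\gamma_{\mu\circ\sigma}(x_{\sigma(1)},\dots,x_{\sigma(n)})$ for all $\sigma\in S_n$; (2) if $x_1=x_2$ then $\gamma_\mu(x_1,x_2,\dots,x_n)=\gamma_{\tilde\mu}(x_1,x_3,\dots,x_n)$ with $\tilde\mu(1)=\mu(1)+\mu(2)$, $\tilde\mu(j)=\mu(j+1)$ ($2\le j\le n-1$), and $\operatorname{Prob}_1$ gives the identity; (3) $\mu(i)=1$ implies $\gamma_\mu(x_1,\dots,x_n)=x_i$; (4) for a constant $C$, $\operatorname{d}(\gamma_\mu(\vec x),\gamma_{\tilde\mu}(\vec x))\le C\|\mu-\tilde\mu\|$ and $\operatorname{d}(\gamma_\mu(\vec x),\gamma_\mu(\vec y))\le\sum_i\mu(i)\operatorname{d}(x_i,y_i)$; (5) $\gamma_\nu(\gamma_\mu(x_1,\dots,x_n),\gamma_{\tilde\mu}(\tilde x_1,\dots,\tilde x_m))=\gamma_\eta(x_1,\dots,x_n,\tilde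 x_1,\dots,\tilde x_m)$ for $\nu\in\operatorname{Prob}_2$, where $\eta(i)=\nu(1)\mu(i)$, $\eta(n+j)=\nu(2)\tilde\mu(j)$. One writes $t_1x_1+\dots+t_nx_n:=\gamma_\mu(x_1,\dots,x_n)$ where $\mu(i)=t_i$. The convex hull is $\operatorname{conv}(\mathfrak F)=\{\sum_i\mu(i)x_i:\mu\in\operatorname{Prob}_n\}$, and the plane generated by $\mathfrak F$ is $\operatorname{plane}(\mathfrak F)=\{x\in X:\exists\, y,z\in\operatorname{conv}(\mathfrak F),\ 0<t\le1 \text{ with } tx+(1-t)y=z\}$. *)

theory Defs
  imports "HOL-Analysis.Analysis" "HOL-Combinatorics.Permutations"
begin

text \<open>Indices are 0-based: the paper's index set {1..n} is rendered as {..<n}.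
  Points of X^(n) are extensional functions in PiE {..<n} (\<lambda>_. X) (undefined outside),
  probability vectors in Prob_n are functions nat => real vanishing outside {..<n}.\<close>

definition Prob :: "nat \<Rightarrow> (nat \<Rightarrow> real) set" where
  "Prob n = {\<mu>. (\<forall>i<n. 0 \<le> \<mu> i) \<and> (\<forall>i\<ge>n. \<mu> i = 0) \<and> (\<Sum>i<n. \<mu> i) = 1}"

definition Xpow :: "'a set \<Rightarrow> nat \<Rightarrow> (nat \<Rightarrow> 'a) set" where
  "Xpow X n = PiE {..<n} (\<lambda>_. X)"

definition l1dist :: "nat \<Rightarrow> (nat \<Rightarrow> real) \<Rightarrow> (nat \<Rightarrow> real) \<Rightarrow> real" where
  "l1dist n \<mu> \<nu> = (\<Sum>i<n. \<bar>\<mu> i - \<nu> i\<bar>)"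

definition pair2 :: "'a \<Rightarrow> 'a \<Rightarrow> nat \<Rightarrow> 'a" where
  "pair2 a b = restrict (\<lambda>i. if i = 0 then a else b) {..<2}"

definition prob2 :: "real \<Rightarrow> real \<Rightarrow> nat \<Rightarrow> real" where
  "prob2 s t = (\<lambda>i. if i = 0 then s else if i = 1 then t else 0)"

definition merge_pt :: "nat \<Rightarrow> (nat \<Rightarrow> 'a) \<Rightarrow> nat \<Rightarrow> 'a" where
  "merge_pt n x = restrict (\<lambda>j. if j = 0 then x 0 else x (Suc j)) {..<n - 1}"

definition merge_prob :: "nat \<Rightarrow> (nat \<Rightarrow> real) \<Rightarrow> nat \<Rightarrow> real" where
  "merge_prob n \<mu> = (\<lambda>j. if j = 0 then \<mu> 0 + \<mu> 1 else if j < n - 1 then \<mu> (Suc j) else 0)"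

definition concat_pt :: "nat \<Rightarrow> nat \<Rightarrow> (nat \<Rightarrow> 'a) \<Rightarrow> (nat \<Rightarrow> 'a) \<Rightarrow> nat \<Rightarrow> 'a" where
  "concat_pt n m x y = restrict (\<lambda>i. if i < n then x i else y (i - n)) {..<n + m}"

definition concat_prob :: "nat \<Rightarrow> nat \<Rightarrow> (nat \<Rightarrow> real) \<Rightarrow> (nat \<Rightarrow> real) \<Rightarrow> (nat \<Rightarrow> real) \<Rightarrow> nat \<Rightarrow> real" where
  "concat_prob n m \<nu> \<mu> \<mu>' = (\<lambda>i. if i < n then \<nu> 0 * \<mu> i
                                  else if i < n + m then \<nu> 1 * \<mu>' (i - n) else 0)"

text \<open>gamma n \<mu> x stands for gamma_\<mu>(x_1,...,x_n).\<close>
definition convex_like ::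
  "('a::metric_space) set \<Rightarrow> (nat \<Rightarrow> (nat \<Rightarrow> real) \<Rightarrow> (nat \<Rightarrow> 'a) \<Rightarrow> 'a) \<Rightarrow> bool" where
  "convex_like X gamma \<longleftrightarrow>
     bounded X \<and>
     (\<forall>n. \<forall>\<mu>\<in>Prob n. (\<forall>x\<in>Xpow X n. gamma n \<mu> x \<in> X) \<and> continuous_on (Xpow X n) (gamma n \<mu>)) \<and>
     \<comment> \<open>(1)\<close>
     (\<forall>n. \<forall>\<mu>\<in>Prob n. \<forall>x\<in>Xpow X n. \<forall>\<sigma>. \<sigma> permutes {..<n} \<longrightarrow>
         gamma n \<mu> x = gamma n (\<mu> \<circ> \<sigma>) (x \<circ> \<sigma>)) \<and>
     \<comment> \<open>(2)\<close>
     (\<forall>n\<ge>2. \<forall>\<mu>\<in>Prob n. \<forall>x\<in>Xpow X n. x 0 = x 1 \<longrightarrow>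
         gamma n \<mu> x = gamma (n - 1) (merge_prob n \<mu>) (merge_pt n x)) \<and>
     (\<forall>\<mu>\<in>Prob 1. \<forall>x\<in>Xpow X 1. gamma 1 \<mu> x = x 0) \<and>
     \<comment> \<open>(3)\<close>
     (\<forall>n. \<forall>\<mu>\<in>Prob n. \<forall>x\<in>Xpow X n. \<forall>i<n. \<mu> i = 1 \<longrightarrow> gamma n \<mu> x = x i) \<and>
     \<comment> \<open>(4)\<close>
     (\<exists>C. \<forall>n. \<forall>\<mu>\<in>Prob n. \<forall>\<mu>'\<in>Prob n. \<forall>x\<in>Xpow X n.
         dist (gamma n \<mu> x) (gamma n \<mu>' x) \<le> C * l1dist n \<mu> \<mu>') \<and>
     (\<forall>n. \<forall>\<mu>\<in>Prob n. \<forall>x\<in>Xpow X n. \<forall>y\<in>Xpow X n.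
         dist (gamma n \<mu> x) (gamma n \<mu> y) \<le> (\<Sum>i<n. \<mu> i * dist (x i) (y i))) \<and>
     \<comment> \<open>(5)\<close>
     (\<forall>n m. \<forall>\<nu>\<in>Prob 2. \<forall>\<mu>\<in>Prob n. \<forall>\<mu>'\<in>Prob m. \<forall>x\<in>Xpow X n. \<forall>y\<in>Xpow X m.
         gamma 2 \<nu> (pair2 (gamma n \<mu> x) (gamma m \<mu>' y))
           = gamma (n + m) (concat_prob n m \<nu> \<mu> \<mu>') (concat_pt n m x y))"

text \<open>conv(F) for F = {x_0,...,x_(n-1)} given by xs.\<close>
definition cl_conv :: "(nat \<Rightarrow> (nat \<Rightarrow> real) \<Rightarrow> (nat \<Rightarrow> 'a) \<Rightarrow> 'a) \<Rightarrow> nat \<Rightarrow> (nat \<Rightarrow> 'a) \<Rightarrow> 'a set" where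
  "cl_conv gamma n xs = {gamma n \<mu> xs | \<mu>. \<mu> \<in> Prob n}"

definition cl_plane :: "'a set \<Rightarrow> (nat \<Rightarrow> (nat \<Rightarrow> real) \<Rightarrow> (nat \<Rightarrow> 'a) \<Rightarrow> 'a) \<Rightarrow> nat \<Rightarrow> (nat \<Rightarrow> 'a) \<Rightarrow> 'a set" where
  "cl_plane X gamma n xs = {x \<in> X. \<exists>y\<in>cl_conv gamma n xs. \<exists>z\<in>cl_conv gamma n xs. \<exists>t::real.
       0 < t \<and> t \<le> 1 \<and> gamma 2 (prob2 t (1 - t)) (pair2 x y) = z}"

definition sigma_compact :: "'a::topological_space set \<Rightarrow> bool" where
  "sigma_compact S \<longleftrightarrow> (\<exists>K :: nat \<Rightarrow> 'a set. (\<forall>k. compact (K k)) \<and> S = (\<Union>k. K k))"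

end

theory Submission
  imports Defs
begin

text \<open>
  The key fact is a cancellation law for binary combinations,
  \<open>t \<cdot> d(x, y) \<le> d(t x + (1-t) z, t y + (1-t) z)\<close> for \<open>0 < t \<le> 1\<close>.  It is proved by a
  telescoping argument: three-point combinations of \<open>x, z, y\<close> are rewritten with the
  axioms (1), (2), (5) so that shifting weight from \<open>y\<close> to \<open>x\<close> in \<open>N\<close> equal steps costs
  \<open>d(t x + (1-t) z, t y + (1-t) z) / t\<close> in total, while axiom (4) controls the end
  points up to \<open>O(1/N)\<close>.

  The plane is then the union over \<open>k\<close> of the layers in which the solving weight is
  at least \<open>1/(k+1)\<close>.  Each layer is compact: its parameters range over the compact set
  \<open>Prob n \<times> Prob n \<times> [a, 1]\<close>, and by cancellation and completeness convergence of the
  parameters along a subsequence forces convergence of the points.  Finally, a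
  \<open>\<sigma>\<close>-compact subset of a metric space is separable.
\<close>

text \<open>Explicit three- and four-point tuples and weights; the axioms of a convex-like
  structure are only ever applied to such short configurations.\<close>

definition vec3 :: "'a \<Rightarrow> 'a \<Rightarrow> 'a \<Rightarrow> nat \<Rightarrow> 'a" where
  "vec3 a b c = restrict (\<lambda>i. if i = 0 then a else if i = 1 then b else c) {..<3}"

definition prob3 :: "real \<Rightarrow> real \<Rightarrow> real \<Rightarrow> nat \<Rightarrow> real" where
  "prob3 a b c = (\<lambda>i. if i = 0 then a else if i = 1 then b else if i = 2 then c else 0)"

definition vec4 :: "'a \<Rightarrow> 'a \<Rightarrow> 'a \<Rightarrow> 'a \<Rightarrow> nat \<Rightarrow> 'a" where
  "vec4 a b c d =
     restrict (\<lambda>i. if i = 0 then a else if i = 1 then b else if i = 2 then c else d) {..<4}"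

definition prob4 :: "real \<Rightarrow> real \<Rightarrow> real \<Rightarrow> real \<Rightarrow> nat \<Rightarrow> real" where
  "prob4 a b c d =
     (\<lambda>i. if i = 0 then a else if i = 1 then b else if i = 2 then c else if i = 3 then d else 0)"

lemma lessThan_2: "{..<2::nat} = {0, 1}"
  and lessThan_3: "{..<3::nat} = {0, 1, 2}"
  and lessThan_4: "{..<4::nat} = {0, 1, 2, 3}"
  by auto

lemma prob2_in_Prob: "0 \<le> s \<Longrightarrow> 0 \<le> t \<Longrightarrow> s + t = 1 \<Longrightarrow> prob2 s t \<in> Prob 2"
  by (auto simp: Prob_def prob2_def lessThan_2)

lemma prob3_in_Prob:
  "0 \<le> a \<Longrightarrow> 0 \<le> b \<Longrightarrow> 0 \<le> c \<Longrightarrow> a + b + c = 1 \<Longrightarrow> prob3 a b c \<in> Prob 3"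
  by (auto simp: Prob_def prob3_def lessThan_3)

lemma prob4_in_Prob:
  "0 \<le> a \<Longrightarrow> 0 \<le> b \<Longrightarrow> 0 \<le> c \<Longrightarrow> 0 \<le> d \<Longrightarrow> a + b + c + d = 1 \<Longrightarrow> prob4 a b c d \<in> Prob 4"
  by (auto simp: Prob_def prob4_def lessThan_4)

lemma pair2_in_Xpow: "a \<in> X \<Longrightarrow> b \<in> X \<Longrightarrow> pair2 a b \<in> Xpow X 2"
  by (auto simp: Xpow_def pair2_def PiE_def extensional_def)

lemma vec3_in_Xpow: "a \<in> X \<Longrightarrow> b \<in> X \<Longrightarrow> c \<in> X \<Longrightarrow> vec3 a b c \<in> Xpow X 3"
  by (auto simp: Xpow_def vec3_def PiE_def extensional_def)

lemma vec4_in_Xpow: "a \<in> X \<Longrightarrow> b \<in> X \<Longrightarrow> c \<in> X \<Longrightarrow> d \<in> X \<Longrightarrow> vec4 a b c d \<in> Xpow X 4"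
  by (auto simp: Xpow_def vec4_def PiE_def extensional_def)

lemma concat_prob_prob2:
  "concat_prob 2 2 (prob2 s (1-s)) (prob2 a (1-a)) (prob2 b (1-b))
     = prob4 (s*a) (s*(1-a)) ((1-s)*b) ((1-s)*(1-b))"
  by (auto simp: fun_eq_iff concat_prob_def prob2_def prob4_def)

lemma concat_pt_pair2: "concat_pt 2 2 (pair2 a b) (pair2 c d) = vec4 a b c d"
  by (auto simp: fun_eq_iff concat_pt_def pair2_def vec4_def)

lemma prob2_swap: "prob2 s t \<circ> Transposition.transpose 0 1 = prob2 t s"
  by (auto simp: fun_eq_iff prob2_def Transposition.transpose_def)

lemma pair2_swap: "pair2 a b \<circ> Transposition.transpose 0 1 = pair2 b a"
  by (auto simp: fun_eq_iff pair2_def Transposition.transpose_def)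

lemma prob3_swap: "prob3 a b c \<circ> Transposition.transpose 0 2 = prob3 c b a"
  by (auto simp: fun_eq_iff prob3_def Transposition.transpose_def)

lemma vec3_swap: "vec3 a b c \<circ> Transposition.transpose 0 2 = vec3 c b a"
  by (auto simp: fun_eq_iff vec3_def Transposition.transpose_def)

lemma prob4_swap: "prob4 a b c d \<circ> Transposition.transpose 1 2 = prob4 a c b d"
  by (auto simp: fun_eq_iff prob4_def Transposition.transpose_def)

lemma vec4_swap: "vec4 a b c d \<circ> Transposition.transpose 1 2 = vec4 a c b d"
  by (auto simp: fun_eq_iff vec4_def Transposition.transpose_def)

lemma merge_prob4: "merge_prob 4 (prob4 a b c d) = prob3 (a+b) c d"
  by (auto simp: fun_eq_iff merge_prob_def prob4_def prob3_def)

lemma merge_vec4: "merge_pt 4 (vec4 a b c d) = vec3 a c d"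
  by (auto simp: fun_eq_iff merge_pt_def vec4_def vec3_def)

lemma l1dist_prob2: "l1dist 2 (prob2 s (1-s)) (prob2 t (1-t)) = 2 * \<bar>s - t\<bar>"
  by (simp add: l1dist_def lessThan_2 prob2_def abs_minus_commute)

lemma l1dist_prob3: "l1dist 3 (prob3 a b c) (prob3 a' b' c') = \<bar>a-a'\<bar> + \<bar>b-b'\<bar> + \<bar>c-c'\<bar>"
  by (simp add: l1dist_def lessThan_3 prob3_def)

lemma Prob_le_1:
  assumes "\<mu> \<in> Prob n" "i < n"
  shows "\<mu> i \<le> 1"
proof -
  have "\<mu> i \<le> (\<Sum>j<n. \<mu> j)"
    using assms by (intro member_le_sum) (auto simp: Prob_def)
  then show ?thesis using assms(1) by (simp add: Prob_def)
qed

lemma Prob_eq_PiE: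
  "Prob n = PiE UNIV (\<lambda>i. if i < n then {0..1} else {0::real}) \<inter> {\<mu>. (\<Sum>i<n. \<mu> i) = 1}"
proof (intro set_eqI iffI)
  fix \<mu> assume "\<mu> \<in> Prob n"
  with Prob_le_1[of \<mu> n]
  show "\<mu> \<in> PiE UNIV (\<lambda>i. if i < n then {0..1} else {0::real}) \<inter> {\<mu>. (\<Sum>i<n. \<mu> i) = 1}"
    by (auto simp: PiE_def Pi_def Prob_def not_less)
next
  fix \<mu> assume "\<mu> \<in> PiE UNIV (\<lambda>i. if i < n then {0..1} else {0::real}) \<inter> {\<mu>. (\<Sum>i<n. \<mu> i) = 1}"
  then have H: "\<And>i. \<mu> i \<in> (if i < n then {0..1} else {0::real})" and "(\<Sum>i<n. \<mu> i) = 1"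
    by (auto simp: PiE_iff)
  moreover have "0 \<le> \<mu> i" if "i < n" for i using H[of i] that by simp
  moreover have "\<mu> i = 0" if "n \<le> i" for i using H[of i] that by simp
  ultimately show "\<mu> \<in> Prob n" unfolding Prob_def by blast
qed

lemma compact_Prob: "compact (Prob n)"
proof -
  have "compactin (product_topology (\<lambda>i. euclidean) UNIV)
          (PiE UNIV (\<lambda>i. if i < n then {0..1} else {0::real}))"
    by (subst compactin_PiE) auto
  then have "compact (PiE UNIV (\<lambda>i. if i < n then {0..1} else {0::real}))"
    by (simp add: euclidean_product_topology)
  moreover have "closed {\<mu> :: nat \<Rightarrow> real. (\<Sum>i<n. \<mu> i) = 1}"
    by (intro closed_Collect_eq continuous_intros continuous_on_product_coordinates)
  ultimately show ?thesis unfolding Prob_eq_PiE by (rule compact_Int_closed)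
qed

lemma tendsto_l1dist:
  assumes "(\<mu>s \<longlongrightarrow> (\<mu> :: nat \<Rightarrow> real)) F"
  shows "((\<lambda>j. l1dist n (\<mu>s j) \<mu>) \<longlongrightarrow> 0) F"
proof -
  have "isCont (\<lambda>\<nu> :: nat \<Rightarrow> real. \<nu> i) \<mu>" for i
    by (metis continuous_on_eq_continuous_at open_UNIV UNIV_I continuous_on_product_coordinates)
  then have "((\<lambda>j. \<mu>s j i) \<longlongrightarrow> \<mu> i) F" for i
    using assms by (rule isCont_tendsto_compose)
  then have "((\<lambda>j. \<Sum>i<n. \<bar>\<mu>s j i - \<mu> i\<bar>) \<longlongrightarrow> (\<Sum>i<n. \<bar>\<mu> i - \<mu> i\<bar>)) F"
    by (intro tendsto_intros)
  then show ?thesis by (simp add: l1dist_def)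
qed

lemma tendsto_dist_bound:
  fixes g :: "nat \<Rightarrow> 'a::metric_space"
  assumes "b \<longlonglongrightarrow> 0" "\<And>j. dist (g j) L \<le> b j"
  shows "g \<longlonglongrightarrow> L"
proof (rule metric_tendsto_imp_tendsto[OF assms(1)])
  show "\<forall>\<^sub>F j in sequentially. dist (g j) L \<le> dist (b j) 0"
    using assms(2) by (intro always_eventually allI) (metis abs_ge_self dist_real_def diff_zero order_trans)
qed

text \<open>A compact set in a metric space has a countable dense subset: the union of
  finite \<open>1/(m+1)\<close>-nets.\<close>

lemma compact_countable_dense:
  fixes K :: "'a::metric_space set"
  assumes "compact K"
  obtains D where "countable D" "D \<subseteq> K" "K \<subseteq> closure D"
proof -
  have "\<exists>F. finite F \<and> F \<subseteq> K \<and> K \<subseteq> (\<Union>c\<in>F. ball c (1 / real (Suc m)))" for m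
  proof -
    have "K \<subseteq> (\<Union>c\<in>K. ball c (1 / real (Suc m)))" by auto
    then show ?thesis
      using compactE_image[OF assms, where C=K and f="\<lambda>c. ball c (1 / real (Suc m))"]
      by (metis open_ball)
  qed
  then obtain F where F: "\<And>m. finite (F m)" "\<And>m. F m \<subseteq> K"
    "\<And>m. K \<subseteq> (\<Union>c\<in>F m. ball c (1 / real (Suc m)))" by metis
  have "countable (\<Union>m. F m)" using F(1) by (simp add: countable_finite)
  moreover have "(\<Union>m. F m) \<subseteq> K" using F(2) by blast
  moreover have "K \<subseteq> closure (\<Union>m. F m)"
  proof
    fix x assume "x \<in> K"
    show "x \<in> closure (\<Union>m. F m)" unfolding closure_approachable
    proof (intro allI impI)
      fix e :: real assume "0 < e"
      then obtain m where m: "inverse (real (Suc m)) < e" using reals_Archimedean by blast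
      obtain c where c: "c \<in> F m" "dist c x < 1 / real (Suc m)" using F(3)[of m] \<open>x \<in> K\<close> by auto
      have "1 / real (Suc m) < e" using m by (simp add: inverse_eq_divide)
      then have "dist c x < e" using c(2) by linarith
      then show "\<exists>c\<in>\<Union>m. F m. dist c x < e" using c(1) by blast
    qed
  qed
  ultimately show ?thesis by (rule that)
qed

lemma sigma_compact_imp_separable:
  fixes S :: "'a::metric_space set"
  assumes "sigma_compact S"
  shows "separable_space (top_of_set S)"
proof -
  from assms obtain K :: "nat \<Rightarrow> 'a set" where KS: "(\<forall>k. compact (K k)) \<and> S = (\<Union>k. K k)"
    unfolding sigma_compact_def ..
  then have K: "\<And>k. compact (K k)" and S: "S = (\<Union>k. K k)" by simp_all
  have "\<forall>k. \<exists>D. countable D \<and> D \<subseteq> K k \<and> K k \<subseteq> closure D"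
    by (meson compact_countable_dense K)
  then obtain D :: "nat \<Rightarrow> 'a set"
    where D: "\<forall>k. countable (D k) \<and> D k \<subseteq> K k \<and> K k \<subseteq> closure (D k)"
    by (metis choice)
  define E where "E = (\<Union>k. D k)"
  have "countable E" unfolding E_def using D by (intro countable_UN) auto
  moreover have "E \<subseteq> S" unfolding S E_def using D by blast
  moreover have "S \<subseteq> closure E"
  proof -
    have "closure (D k) \<subseteq> closure E" for k by (rule closure_mono) (auto simp: E_def)
    then show ?thesis unfolding S using D by blast
  qed
  ultimately have "top_of_set S closure_of E = S"
    by (simp add: closure_of_subtopology euclidean_closure_of Int_absorb1 Int_absorb2)
  then show ?thesis
    unfolding separable_space_def using \<open>countable E\<close> \<open>E \<subseteq> S\<close> by auto
qed

section \<open>The plane as a countable union of layers\<close>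

text \<open>The part of the plane in which the solving weight \<open>t\<close> is at least \<open>a\<close>.
  For \<open>a > 0\<close> these layers will turn out to be compact.\<close>

definition plane_layer ::
  "'a set \<Rightarrow> (nat \<Rightarrow> (nat \<Rightarrow> real) \<Rightarrow> (nat \<Rightarrow> 'a) \<Rightarrow> 'a) \<Rightarrow> nat \<Rightarrow> (nat \<Rightarrow> 'a) \<Rightarrow> real \<Rightarrow> 'a set"
where
  "plane_layer X gamma n xs a = {x \<in> X. \<exists>\<mu>\<in>Prob n. \<exists>\<nu>\<in>Prob n. \<exists>t. a \<le> t \<and> t \<le> 1 \<and>
     gamma 2 (prob2 t (1 - t)) (pair2 x (gamma n \<mu> xs)) = gamma n \<nu> xs}"

text \<open>Since the solving weight of every point of the plane is positive, the plane is
  the union of the layers \<open>a = 1/(k+1)\<close>.\<close>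

lemma cl_plane_eq_Union_layers:
  "cl_plane X gamma n xs = (\<Union>k. plane_layer X gamma n xs (1 / real (Suc k)))"
proof (intro set_eqI iffI)
  fix x assume "x \<in> cl_plane X gamma n xs"
  then obtain \<mu> \<nu> t where "x \<in> X" "\<mu> \<in> Prob n" "\<nu> \<in> Prob n" "0 < t" "t \<le> 1"
    and "gamma 2 (prob2 t (1 - t)) (pair2 x (gamma n \<mu> xs)) = gamma n \<nu> xs"
    unfolding cl_plane_def cl_conv_def by blast
  moreover obtain k where "inverse (real (Suc k)) < t" using reals_Archimedean \<open>0 < t\<close> by blast
  then have "1 / real (Suc k) \<le> t" by (simp add: inverse_eq_divide)
  ultimately have "x \<in> plane_layer X gamma n xs (1 / real (Suc k))"
    unfolding plane_layer_def by blast
  then show "x \<in> (\<Union>k. plane_layer X gamma n xs (1 / real (Suc k)))" by blast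
next
  fix x assume "x \<in> (\<Union>k. plane_layer X gamma n xs (1 / real (Suc k)))"
  then obtain k \<mu> \<nu> t where "x \<in> X" "\<mu> \<in> Prob n" "\<nu> \<in> Prob n" "1 / real (Suc k) \<le> t" "t \<le> 1"
    and "gamma 2 (prob2 t (1 - t)) (pair2 x (gamma n \<mu> xs)) = gamma n \<nu> xs"
    unfolding plane_layer_def by blast
  moreover have "0 < 1 / real (Suc k)" by simp
  then have "0 < t" using \<open>1 / real (Suc k) \<le> t\<close> by linarith
  ultimately show "x \<in> cl_plane X gamma n xs"
    unfolding cl_plane_def cl_conv_def by blast
qed

section \<open>Consequences of the axioms\<close>

context
  fixes X :: "'a::metric_space set"
    and gamma :: "nat \<Rightarrow> (nat \<Rightarrow> real) \<Rightarrow> (nat \<Rightarrow> 'a) \<Rightarrow> 'a"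
  assumes convex_like: "convex_like X gamma"
begin

lemma gamma_in: "\<mu> \<in> Prob n \<Longrightarrow> x \<in> Xpow X n \<Longrightarrow> gamma n \<mu> x \<in> X"
  using convex_like unfolding convex_like_def by (elim conjE) blast

lemma gamma_permute:
  "\<mu> \<in> Prob n \<Longrightarrow> x \<in> Xpow X n \<Longrightarrow> \<sigma> permutes {..<n} \<Longrightarrow>
     gamma n \<mu> x = gamma n (\<mu> \<circ> \<sigma>) (x \<circ> \<sigma>)"
  using convex_like unfolding convex_like_def by (elim conjE) blast

lemma gamma_merge:
  "2 \<le> n \<Longrightarrow> \<mu> \<in> Prob n \<Longrightarrow> x \<in> Xpow X n \<Longrightarrow> x 0 = x 1 \<Longrightarrow>
     gamma n \<mu> x = gamma (n - 1) (merge_prob n \<mu>) (merge_pt n x)"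
  using convex_like unfolding convex_like_def by (elim conjE) blast

lemma gamma_vertex:
  "\<mu> \<in> Prob n \<Longrightarrow> x \<in> Xpow X n \<Longrightarrow> i < n \<Longrightarrow> \<mu> i = 1 \<Longrightarrow> gamma n \<mu> x = x i"
  using convex_like unfolding convex_like_def by (elim conjE) blast

lemma gamma_point_lipschitz:
  assumes "\<mu> \<in> Prob n" "x \<in> Xpow X n" "y \<in> Xpow X n"
  shows "dist (gamma n \<mu> x) (gamma n \<mu> y) \<le> (\<Sum>i<n. \<mu> i * dist (x i) (y i))"
proof -
  have "\<forall>n. \<forall>\<mu>\<in>Prob n. \<forall>x\<in>Xpow X n. \<forall>y\<in>Xpow X n.
          dist (gamma n \<mu> x) (gamma n \<mu> y) \<le> (\<Sum>i<n. \<mu> i * dist (x i) (y i))"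
    using convex_like unfolding convex_like_def by (elim conjE) assumption
  then show ?thesis using assms by blast
qed

lemma gamma_concat:
  assumes "\<nu> \<in> Prob 2" "\<mu> \<in> Prob n" "\<mu>' \<in> Prob m" "x \<in> Xpow X n" "y \<in> Xpow X m"
  shows "gamma 2 \<nu> (pair2 (gamma n \<mu> x) (gamma m \<mu>' y))
           = gamma (n + m) (concat_prob n m \<nu> \<mu> \<mu>') (concat_pt n m x y)"
proof -
  have "\<forall>n m. \<forall>\<nu>\<in>Prob 2. \<forall>\<mu>\<in>Prob n. \<forall>\<mu>'\<in>Prob m. \<forall>x\<in>Xpow X n. \<forall>y\<in>Xpow X m.
          gamma 2 \<nu> (pair2 (gamma n \<mu> x) (gamma m \<mu>' y))
            = gamma (n + m) (concat_prob n m \<nu> \<mu> \<mu>') (concat_pt n m x y)"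
    using convex_like unfolding convex_like_def by (elim conjE) assumption
  then show ?thesis using assms by blast
qed

definition weight_const :: real where
  "weight_const = (SOME C. 0 \<le> C \<and> (\<forall>n. \<forall>\<mu>\<in>Prob n. \<forall>\<mu>'\<in>Prob n. \<forall>x\<in>Xpow X n.
                       dist (gamma n \<mu> x) (gamma n \<mu>' x) \<le> C * l1dist n \<mu> \<mu>'))"

lemma weight_const:
  "0 \<le> weight_const \<and> (\<forall>n. \<forall>\<mu>\<in>Prob n. \<forall>\<mu>'\<in>Prob n. \<forall>x\<in>Xpow X n.
      dist (gamma n \<mu> x) (gamma n \<mu>' x) \<le> weight_const * l1dist n \<mu> \<mu>')"
proof -
  have "\<exists>C. \<forall>n. \<forall>\<mu>\<in>Prob n. \<forall>\<mu>'\<in>Prob n. \<forall>x\<in>Xpow X n.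
      dist (gamma n \<mu> x) (gamma n \<mu>' x) \<le> C * l1dist n \<mu> \<mu>'"
    using convex_like unfolding convex_like_def by (elim conjE) assumption
  then obtain C where C: "\<forall>n. \<forall>\<mu>\<in>Prob n. \<forall>\<mu>'\<in>Prob n. \<forall>x\<in>Xpow X n.
      dist (gamma n \<mu> x) (gamma n \<mu>' x) \<le> C * l1dist n \<mu> \<mu>'" ..
  have "0 \<le> l1dist n \<mu> \<mu>'" for n \<mu> \<mu>'
    unfolding l1dist_def by (simp add: sum_nonneg)
  then have "dist (gamma n \<mu> x) (gamma n \<mu>' x) \<le> max C 0 * l1dist n \<mu> \<mu>'"
    if "\<mu> \<in> Prob n" "\<mu>' \<in> Prob n" "x \<in> Xpow X n" for n \<mu> \<mu>' x
    using C that by (meson max.cobounded1 mult_right_mono order_trans)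
  then have "\<exists>C. 0 \<le> C \<and> (\<forall>n. \<forall>\<mu>\<in>Prob n. \<forall>\<mu>'\<in>Prob n. \<forall>x\<in>Xpow X n.
      dist (gamma n \<mu> x) (gamma n \<mu>' x) \<le> C * l1dist n \<mu> \<mu>')"
    by (intro exI[of _ "max C 0"]) auto
  then show ?thesis
    unfolding weight_const_def by (rule someI_ex)
qed

lemma weight_const_nonneg: "0 \<le> weight_const"
  using weight_const by blast

lemma gamma_weight_lipschitz:
  "\<mu> \<in> Prob n \<Longrightarrow> \<mu>' \<in> Prob n \<Longrightarrow> x \<in> Xpow X n \<Longrightarrow>
     dist (gamma n \<mu> x) (gamma n \<mu>' x) \<le> weight_const * l1dist n \<mu> \<mu>'"
  using weight_const by blast

abbreviation mix :: "real \<Rightarrow> 'a \<Rightarrow> 'a \<Rightarrow> 'a" where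
  "mix t x y \<equiv> gamma 2 (prob2 t (1 - t)) (pair2 x y)"

lemma mix_in: "0 \<le> t \<Longrightarrow> t \<le> 1 \<Longrightarrow> x \<in> X \<Longrightarrow> y \<in> X \<Longrightarrow> mix t x y \<in> X"
  by (intro gamma_in prob2_in_Prob pair2_in_Xpow) auto

lemma mix_swap:
  assumes "0 \<le> t" "t \<le> 1" "x \<in> X" "y \<in> X"
  shows "mix t x y = mix (1 - t) y x"
proof -
  have "prob2 t (1 - t) \<in> Prob 2" "pair2 x y \<in> Xpow X 2"
    using assms by (auto intro: prob2_in_Prob pair2_in_Xpow)
  from gamma_permute[OF this, of "Transposition.transpose 0 1", unfolded prob2_swap pair2_swap]
  show ?thesis by (simp add: permutes_swap_id)
qed

lemma mix_dist_left:
  assumes "0 \<le> t" "t \<le> 1" "x \<in> X" "y \<in> X" "z \<in> X"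
  shows "dist (mix t x z) (mix t y z) \<le> t * dist x y"
proof -
  have "dist (mix t x z) (mix t y z)
          \<le> (\<Sum>i<2. prob2 t (1 - t) i * dist (pair2 x z i) (pair2 y z i))"
    using assms by (intro gamma_point_lipschitz prob2_in_Prob pair2_in_Xpow) auto
  also have "\<dots> = t * dist x y" by (simp add: lessThan_2 prob2_def pair2_def)
  finally show ?thesis .
qed

lemma mix_dist_right:
  assumes "0 \<le> t" "t \<le> 1" "x \<in> X" "y \<in> X" "y' \<in> X"
  shows "dist (mix t x y) (mix t x y') \<le> (1 - t) * dist y y'"
proof -
  have "dist (mix t x y) (mix t x y')
          \<le> (\<Sum>i<2. prob2 t (1 - t) i * dist (pair2 x y i) (pair2 x y' i))"
    using assms by (intro gamma_point_lipschitz prob2_in_Prob pair2_in_Xpow) auto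
  also have "\<dots> = (1 - t) * dist y y'" by (simp add: lessThan_2 prob2_def pair2_def)
  finally show ?thesis .
qed

lemma mix_weight_lipschitz:
  assumes "0 \<le> s" "s \<le> 1" "0 \<le> t" "t \<le> 1" "x \<in> X" "y \<in> X"
  shows "dist (mix s x y) (mix t x y) \<le> 2 * weight_const * \<bar>s - t\<bar>"
  using gamma_weight_lipschitz[of "prob2 s (1 - s)" 2 "prob2 t (1 - t)" "pair2 x y"] assms
  by (simp add: prob2_in_Prob pair2_in_Xpow l1dist_prob2)

text \<open>This is axiom (5)
  followed by a transposition (1) and the merging of the two copies of \<open>u\<close> (2).\<close>

lemma mix_of_mixes:
  assumes u: "u \<in> X" "v \<in> X" "w \<in> X"
    and weights: "0 \<le> \<theta>" "\<theta> \<le> 1" "0 \<le> l" "l \<le> 1" "0 \<le> p" "p \<le> 1"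
  shows "mix \<theta> (mix l u v) (mix p u w)
           = gamma 3 (prob3 (\<theta>*l + (1-\<theta>)*p) (\<theta>*(1-l)) ((1-\<theta>)*(1-p))) (vec3 u v w)"
proof -
  let ?\<nu> = "prob4 (\<theta>*l) (\<theta>*(1-l)) ((1-\<theta>)*p) ((1-\<theta>)*(1-p))"
  let ?\<mu> = "prob4 (\<theta>*l) ((1-\<theta>)*p) (\<theta>*(1-l)) ((1-\<theta>)*(1-p))"
  have \<nu>: "?\<nu> \<in> Prob 4" and \<mu>: "?\<mu> \<in> Prob 4"
    using weights by (intro prob4_in_Prob mult_nonneg_nonneg; auto simp: algebra_simps)+
  have "mix \<theta> (mix l u v) (mix p u w) = gamma 4 ?\<nu> (vec4 u v u w)"
    using gamma_concat[of "prob2 \<theta> (1-\<theta>)" "prob2 l (1-l)" 2 "prob2 p (1-p)" 2 "pair2 u v" "pair2 u w"]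
      u weights
    by (simp add: prob2_in_Prob pair2_in_Xpow concat_prob_prob2 concat_pt_pair2)
  also have "\<dots> = gamma 4 ?\<mu> (vec4 u u v w)"
    using gamma_permute[OF \<nu> vec4_in_Xpow[OF u(1,2,1,3)], of "Transposition.transpose 1 2",
        unfolded prob4_swap vec4_swap]
    by (simp add: permutes_swap_id)
  also have "\<dots> = gamma 3 (prob3 (\<theta>*l + (1-\<theta>)*p) (\<theta>*(1-l)) ((1-\<theta>)*(1-p))) (vec3 u v w)"
  proof -
    have "vec4 u u v w 0 = vec4 u u v w 1" by (simp add: vec4_def)
    from gamma_merge[OF _ \<mu> vec4_in_Xpow[OF u(1,1,2,3)] this]
    show ?thesis by (simp add: merge_prob4 merge_vec4)
  qed
  finally show ?thesis .
qed

lemma mix_of_mixes':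
  assumes xyz: "x \<in> X" "y \<in> X" "z \<in> X"
    and weights: "0 \<le> \<theta>" "\<theta> \<le> 1" "0 \<le> l" "l \<le> 1" "0 \<le> p" "p \<le> 1"
  shows "mix \<theta> (mix l y z) (mix p x y)
           = gamma 3 (prob3 ((1-\<theta>)*p) (\<theta>*(1-l)) (\<theta>*l + (1-\<theta>)*(1-p))) (vec3 x z y)"
proof -
  let ?\<mu> = "prob3 (\<theta>*l + (1-\<theta>)*(1-p)) (\<theta>*(1-l)) ((1-\<theta>)*p)"
  have \<mu>: "?\<mu> \<in> Prob 3"
    using weights by (intro prob3_in_Prob add_nonneg_nonneg mult_nonneg_nonneg) (auto simp: algebra_simps)
  have "mix \<theta> (mix l y z) (mix p x y) = mix \<theta> (mix l y z) (mix (1 - p) y x)"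
    using mix_swap[of p x y] xyz weights by simp
  also have "\<dots> = gamma 3 ?\<mu> (vec3 y z x)"
    using mix_of_mixes[of y z x \<theta> l "1 - p"] xyz weights by simp
  also have "\<dots> = gamma 3 (prob3 ((1-\<theta>)*p) (\<theta>*(1-l)) (\<theta>*l + (1-\<theta>)*(1-p))) (vec3 x z y)"
    using gamma_permute[OF \<mu> vec3_in_Xpow[OF xyz(2,3,1)], of "Transposition.transpose 0 2",
        unfolded prob3_swap vec3_swap]
    by (simp add: permutes_swap_id)
  finally show ?thesis .
qed

text \<open>One step of the telescoping argument behind cancellation: shifting the weight
  \<open>\<theta> l\<close> from the third point \<open>y\<close> to the first point \<open>x\<close> of a three-point combination
  costs at most \<open>\<theta> \<cdot> dist (l x + (1-l) z) (l y + (1-l) z)\<close>, because both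
  combinations are \<open>\<theta>\<close>-combinations of those two points with a common point \<open>W\<close>.\<close>

lemma gamma3_shift_step:
  assumes xyz: "x \<in> X" "y \<in> X" "z \<in> X" and \<theta>: "0 < \<theta>" "\<theta> < 1" and l: "0 \<le> l" "l \<le> 1"
    and s: "0 \<le> s" "s \<le> 1 - \<theta>"
  shows "dist (gamma 3 (prob3 s (\<theta>*(1-l)) (1 - \<theta>*(1-l) - s)) (vec3 x z y))
              (gamma 3 (prob3 (\<theta>*l + s) (\<theta>*(1-l)) (1 - \<theta>*(1-l) - s - \<theta>*l)) (vec3 x z y))
         \<le> \<theta> * dist (mix l x z) (mix l y z)"
proof -
  define p where "p = s / (1 - \<theta>)"
  have p: "0 \<le> p" "p \<le> 1" and ps: "(1 - \<theta>) * p = s"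
    using \<theta> s by (auto simp: p_def field_simps)
  define W where "W = mix p x y"
  have W: "W \<in> X" unfolding W_def using p xyz by (intro mix_in) auto
  have "\<theta>*l + (1-\<theta>)*(1-p) = 1 - \<theta>*(1-l) - s"
    using ps by (simp add: algebra_simps)
  then have b: "mix \<theta> (mix l y z) W = gamma 3 (prob3 s (\<theta>*(1-l)) (1 - \<theta>*(1-l) - s)) (vec3 x z y)"
    unfolding W_def using mix_of_mixes'[of x y z \<theta> l p] xyz \<theta> l p ps by simp
  have "(1-\<theta>)*(1-p) = 1 - \<theta>*(1-l) - s - \<theta>*l"
    using ps by (simp add: algebra_simps)
  then have a: "mix \<theta> (mix l x z) W
      = gamma 3 (prob3 (\<theta>*l + s) (\<theta>*(1-l)) (1 - \<theta>*(1-l) - s - \<theta>*l)) (vec3 x z y)"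
    unfolding W_def using mix_of_mixes[of x z y \<theta> l p] xyz \<theta> l p ps by simp
  have "dist (mix \<theta> (mix l y z) W) (mix \<theta> (mix l x z) W) \<le> \<theta> * dist (mix l y z) (mix l x z)"
    using xyz \<theta> l W by (intro mix_dist_left mix_in) auto
  then show ?thesis unfolding a b by (simp add: dist_commute)
qed

text \<open>Telescoping \<open>N\<close> shift steps moves the weight \<open>N l \<theta>\<close> from \<open>y\<close> to \<open>x\<close>
  at cost \<open>N \<theta> \<cdot> dist (l x + (1-l) z) (l y + (1-l) z)\<close>; the constraint on \<open>\<theta>\<close> says that
  the last step exactly exhausts the weight available on \<open>y\<close>.\<close>

lemma gamma3_walk:
  fixes N :: nat
  assumes xyz: "x \<in> X" "y \<in> X" "z \<in> X" and l: "0 \<le> l" "l \<le> 1" and \<theta>: "0 < \<theta>" "\<theta> < 1"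
    and walk: "(real N - 1) * l * \<theta> = 1 - \<theta>"
  shows "dist (gamma 3 (prob3 0 (\<theta>*(1-l)) (1 - \<theta>*(1-l))) (vec3 x z y))
              (gamma 3 (prob3 (real N * l * \<theta>) (\<theta>*(1-l)) (1 - \<theta>*(1-l) - real N * l * \<theta>)) (vec3 x z y))
         \<le> real N * \<theta> * dist (mix l x z) (mix l y z)"
proof -
  define D where "D = dist (mix l x z) (mix l y z)"
  define P where
    "P k = gamma 3 (prob3 (real k * l * \<theta>) (\<theta>*(1-l)) (1 - \<theta>*(1-l) - real k * l * \<theta>)) (vec3 x z y)"
    for k
  have step: "dist (P k) (P (Suc k)) \<le> \<theta> * D" if "k < N" for k
  proof -
    have "real k * l * \<theta> \<le> (real N - 1) * l * \<theta>"
      using that l \<theta> by (intro mult_right_mono) auto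
    then have "real k * l * \<theta> \<le> 1 - \<theta>" using walk by simp
    then have "dist (P k) (gamma 3 (prob3 (\<theta>*l + real k * l * \<theta>) (\<theta>*(1-l))
                  (1 - \<theta>*(1-l) - real k * l * \<theta> - \<theta>*l)) (vec3 x z y)) \<le> \<theta> * D"
      using gamma3_shift_step[of x y z \<theta> l "real k * l * \<theta>"] xyz l \<theta>
      unfolding P_def D_def by simp
    moreover have "\<theta>*l + real k * l * \<theta> = real (Suc k) * l * \<theta>"
      "1 - \<theta>*(1-l) - real k * l * \<theta> - \<theta>*l = 1 - \<theta>*(1-l) - real (Suc k) * l * \<theta>"
      by (simp_all add: algebra_simps)
    ultimately show ?thesis unfolding P_def by simp
  qed
  have "dist (P 0) (P m) \<le> real m * \<theta> * D" if "m \<le> N" for m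
    using that
  proof (induction m)
    case (Suc m)
    have "dist (P 0) (P (Suc m)) \<le> dist (P 0) (P m) + dist (P m) (P (Suc m))"
      by (rule dist_triangle)
    also have "\<dots> \<le> real m * \<theta> * D + \<theta> * D" using Suc step by (intro add_mono) auto
    finally show ?case by (simp add: algebra_simps)
  qed simp
  from this[of N] show ?thesis by (simp add: P_def D_def)
qed

text \<open>By axioms (3) and (4), a three-point combination putting weight \<open>1 - \<epsilon>\<close> on one
  vertex lies within \<open>2 C \<epsilon>\<close> of that vertex.\<close>

lemma gamma3_near_vertices:
  assumes xyz: "x \<in> X" "y \<in> X" "z \<in> X" and \<epsilon>: "0 \<le> \<epsilon>" "\<epsilon> \<le> 1"
  shows "dist (gamma 3 (prob3 0 \<epsilon> (1 - \<epsilon>)) (vec3 x z y)) y \<le> weight_const * (2 * \<epsilon>)"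
    and "dist (gamma 3 (prob3 (1 - \<epsilon>) \<epsilon> 0) (vec3 x z y)) x \<le> weight_const * (2 * \<epsilon>)"
proof -
  have v: "vec3 x z y \<in> Xpow X 3" using xyz by (intro vec3_in_Xpow)
  have "gamma 3 (prob3 0 0 1) (vec3 x z y) = y"
    using gamma_vertex[OF prob3_in_Prob v, of 0 0 1 2] by (simp add: vec3_def prob3_def)
  moreover have "dist (gamma 3 (prob3 0 \<epsilon> (1 - \<epsilon>)) (vec3 x z y)) (gamma 3 (prob3 0 0 1) (vec3 x z y))
      \<le> weight_const * l1dist 3 (prob3 0 \<epsilon> (1 - \<epsilon>)) (prob3 0 0 1)"
    using \<epsilon> v by (intro gamma_weight_lipschitz prob3_in_Prob) auto
  ultimately show "dist (gamma 3 (prob3 0 \<epsilon> (1 - \<epsilon>)) (vec3 x z y)) y \<le> weight_const * (2 * \<epsilon>)"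
    using \<epsilon> by (simp add: l1dist_prob3)
  have "gamma 3 (prob3 1 0 0) (vec3 x z y) = x"
    using gamma_vertex[OF prob3_in_Prob v, of 1 0 0 0] by (simp add: vec3_def prob3_def)
  moreover have "dist (gamma 3 (prob3 (1 - \<epsilon>) \<epsilon> 0) (vec3 x z y)) (gamma 3 (prob3 1 0 0) (vec3 x z y))
      \<le> weight_const * l1dist 3 (prob3 (1 - \<epsilon>) \<epsilon> 0) (prob3 1 0 0)"
    using \<epsilon> v by (intro gamma_weight_lipschitz prob3_in_Prob) auto
  ultimately show "dist (gamma 3 (prob3 (1 - \<epsilon>) \<epsilon> 0) (vec3 x z y)) x \<le> weight_const * (2 * \<epsilon>)"
    using \<epsilon> by (simp add: l1dist_prob3)
qed

text \<open>Quantitative cancellation: with \<open>\<theta> = 1 / (l (N - 1) + 1)\<close> the walk of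
  \<open>gamma3_walk\<close> connects two points within \<open>2 C \<theta>\<close> of \<open>y\<close> and of \<open>x\<close>.\<close>

lemma cancellation_estimate:
  fixes N :: nat and l :: real
  assumes xyz: "x \<in> X" "y \<in> X" "z \<in> X" and l: "0 < l" "l \<le> 1" and N: "2 \<le> N"
  shows "dist x y \<le> 4 * weight_const / (l * N) + dist (mix l x z) (mix l y z) / l"
proof -
  define C where "C = weight_const"
  define D where "D = dist (mix l x z) (mix l y z)"
  define d where "d = l * (real N - 1) + 1"
  define \<theta> where "\<theta> = 1 / d"
  define \<epsilon> where "\<epsilon> = \<theta> * (1 - l)"
  have "l \<le> l * (real N - 1)" using l N by (simp add: mult_le_cancel_left1)
  then have "1 < d" using l by (simp add: d_def)
  then have \<theta>: "0 < \<theta>" "\<theta> < 1" and "\<theta> * d = 1" by (simp_all add: \<theta>_def)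
  then have walk: "(real N - 1) * l * \<theta> = 1 - \<theta>" by (simp add: d_def algebra_simps)
  then have N_\<theta>: "real N * l * \<theta> = 1 - \<epsilon>" by (simp add: \<epsilon>_def algebra_simps)
  have \<epsilon>: "0 \<le> \<epsilon>" "\<epsilon> \<le> \<theta>" using \<theta> l by (auto simp: \<epsilon>_def mult_left_le)
  define A where "A = gamma 3 (prob3 0 \<epsilon> (1 - \<epsilon>)) (vec3 x z y)"
  define B where "B = gamma 3 (prob3 (1 - \<epsilon>) \<epsilon> 0) (vec3 x z y)"
  have "dist A B \<le> real N * \<theta> * D"
    using gamma3_walk[OF xyz _ l(2) \<theta> walk] l unfolding A_def B_def N_\<theta> \<epsilon>_def D_def by simp
  moreover have "dist A y \<le> C * (2 * \<epsilon>)" "dist B x \<le> C * (2 * \<epsilon>)"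
    using gamma3_near_vertices[OF xyz, of \<epsilon>] \<epsilon> \<theta> unfolding A_def B_def C_def by simp_all
  ultimately have "dist x y \<le> 4 * C * \<epsilon> + real N * \<theta> * D"
    using dist_triangle[of x y A] dist_triangle[of x A B] dist_commute[of x B] dist_commute[of B A]
    by linarith
  also have "\<dots> \<le> 4 * C / (l * N) + D / l"
  proof (rule add_mono)
    have lN: "0 < l * real N" using l N by simp
    have "\<theta> * (l * real N) \<le> 1" using N_\<theta> \<epsilon> by (simp add: mult_ac)
    then have "\<theta> \<le> 1 / (l * real N)" using lN by (simp add: pos_le_divide_eq)
    then have "\<epsilon> \<le> 1 / (l * real N)" using \<epsilon> by linarith
    then have "4 * C * \<epsilon> \<le> 4 * C * (1 / (l * real N))"
      using weight_const_nonneg unfolding C_def by (intro mult_left_mono) auto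
    then show "4 * C * \<epsilon> \<le> 4 * C / (l * N)" by simp
    have "real N * \<theta> * l \<le> 1" using N_\<theta> \<epsilon> by (simp add: mult_ac)
    then have "real N * \<theta> \<le> 1 / l" using l by (simp add: pos_le_divide_eq)
    from mult_right_mono[OF this zero_le_dist]
    show "real N * \<theta> * D \<le> D / l" by (simp add: D_def)
  qed
  finally show ?thesis unfolding C_def D_def .
qed

text \<open>Cancellation law (letting \<open>N \<rightarrow> \<infinity>\<close>): combining with a common point \<open>z\<close>
  with weight \<open>t > 0\<close> on the moving point is injective, with inverse Lipschitz
  constant \<open>1/t\<close>.\<close>

lemma mix_cancellation:
  assumes xyz: "x \<in> X" "y \<in> X" "z \<in> X" and t: "0 < t" "t \<le> 1"
  shows "t * dist x y \<le> dist (mix t x z) (mix t y z)"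
proof -
  define D where "D = dist (mix t x z) (mix t y z)"
  have "filterlim (\<lambda>N. t * real N) at_top sequentially"
    using t by (intro filterlim_tendsto_pos_mult_at_top[OF tendsto_const] filterlim_real_sequentially)
  then have "(\<lambda>N. 4 * weight_const / (t * real N)) \<longlonglongrightarrow> 0"
    by (intro tendsto_divide_0[OF tendsto_const] filterlim_at_top_imp_at_infinity)
  then have "(\<lambda>N. 4 * weight_const / (t * real N) + D / t) \<longlonglongrightarrow> 0 + D / t"
    by (intro tendsto_add tendsto_const)
  moreover have "\<forall>\<^sub>F N in sequentially. dist x y \<le> 4 * weight_const / (t * real N) + D / t"
    using eventually_ge_at_top[of 2] by eventually_elim (use cancellation_estimate xyz t in \<open>simp add: D_def\<close>)
  ultimately have "dist x y \<le> D / t"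
    by (intro tendsto_lowerbound) auto
  then show ?thesis using t by (simp add: D_def field_simps)
qed

lemma gamma_weight_tendsto:
  assumes "xs \<in> Xpow X n" "\<And>j. \<mu>s j \<in> Prob n" "\<mu> \<in> Prob n" "\<mu>s \<longlonglongrightarrow> \<mu>"
  shows "(\<lambda>j. gamma n (\<mu>s j) xs) \<longlonglongrightarrow> gamma n \<mu> xs"
proof (rule tendsto_dist_bound)
  show "(\<lambda>j. weight_const * l1dist n (\<mu>s j) \<mu>) \<longlonglongrightarrow> 0"
    using assms(4) by (intro tendsto_mult_right_zero tendsto_l1dist)
  show "dist (gamma n (\<mu>s j) xs) (gamma n \<mu> xs) \<le> weight_const * l1dist n (\<mu>s j) \<mu>" for j
    using assms by (intro gamma_weight_lipschitz)
qed

lemma mix_tendsto_frozen: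
  assumes x: "\<And>j. x j \<in> X" and y: "\<And>j. y j \<in> X" and y0: "y0 \<in> X"
    and T: "\<And>j. 0 \<le> T j" "\<And>j. T j \<le> 1" and t0: "0 \<le> t0" "t0 \<le> 1"
    and lim: "T \<longlonglongrightarrow> t0" "y \<longlonglongrightarrow> y0" "z \<longlonglongrightarrow> z0"
    and eq: "\<And>j. mix (T j) (x j) (y j) = z j"
  shows "(\<lambda>j. mix t0 (x j) y0) \<longlonglongrightarrow> z0"
proof (rule tendsto_dist_bound)
  have "(\<lambda>j. dist (y j) y0) \<longlonglongrightarrow> 0" "(\<lambda>j. dist (z j) z0) \<longlonglongrightarrow> 0"
    using lim(2,3) by (simp_all add: tendsto_dist_iff[symmetric])
  moreover have "(\<lambda>j. \<bar>t0 - T j\<bar>) \<longlonglongrightarrow> 0"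
    using tendsto_diff[OF tendsto_const[of t0] lim(1)] by (intro tendsto_rabs_zero) simp
  ultimately have "(\<lambda>j. (1 - t0) * dist (y j) y0 + 2 * weight_const * \<bar>t0 - T j\<bar> + dist (z j) z0)
      \<longlonglongrightarrow> (1 - t0) * 0 + 2 * weight_const * 0 + 0"
    by (intro tendsto_intros)
  then show "(\<lambda>j. (1 - t0) * dist (y j) y0 + 2 * weight_const * \<bar>t0 - T j\<bar> + dist (z j) z0)
      \<longlonglongrightarrow> 0" by simp
  fix j
  have "dist (mix t0 (x j) y0) (mix t0 (x j) (y j)) \<le> (1 - t0) * dist (y j) y0"
    using mix_dist_right[of t0 "x j" y0 "y j"] x y y0 t0 by (simp add: dist_commute)
  moreover have "dist (mix t0 (x j) (y j)) (z j) \<le> 2 * weight_const * \<bar>t0 - T j\<bar>"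
    unfolding eq[symmetric] using x y t0 T by (intro mix_weight_lipschitz) auto
  ultimately show "dist (mix t0 (x j) y0) z0
      \<le> (1 - t0) * dist (y j) y0 + 2 * weight_const * \<bar>t0 - T j\<bar> + dist (z j) z0"
    using dist_triangle[of "mix t0 (x j) y0" z0 "mix t0 (x j) (y j)"]
      dist_triangle[of "mix t0 (x j) (y j)" z0 "z j"] by linarith
qed

lemma Cauchy_by_cancellation:
  assumes x: "\<And>j. x j \<in> X" and y: "y \<in> X" and t: "0 < t" "t \<le> 1"
    and "Cauchy (\<lambda>j. mix t (x j) y)"
  shows "Cauchy x"
proof (rule metric_CauchyI)
  fix e :: real assume "0 < e"
  then have "0 < t * e" using t by simp
  from metric_CauchyD[OF assms(5) this]
  obtain M where M: "\<forall>m\<ge>M. \<forall>k\<ge>M. dist (mix t (x m) y) (mix t (x k) y) < t * e"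
    by blast
  have "dist (x m) (x k) < e" if "M \<le> m" "M \<le> k" for m k
  proof -
    have "t * dist (x m) (x k) \<le> dist (mix t (x m) y) (mix t (x k) y)"
      using x y t by (intro mix_cancellation)
    with M that have "t * dist (x m) (x k) < t * e" by fastforce
    then show ?thesis using t by simp
  qed
  then show "\<exists>M. \<forall>m\<ge>M. \<forall>k\<ge>M. dist (x m) (x k) < e" by blast
qed

lemma mix_equation_limit:
  assumes "complete X"
    and x: "\<And>j. x j \<in> X" and y: "\<And>j. y j \<in> X" and y0: "y0 \<in> X"
    and T: "\<And>j. 0 \<le> T j" "\<And>j. T j \<le> 1" and t0: "0 < t0" "t0 \<le> 1"
    and lim: "T \<longlonglongrightarrow> t0" "y \<longlonglongrightarrow> y0" "z \<longlonglongrightarrow> z0"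
    and eq: "\<And>j. mix (T j) (x j) (y j) = z j"
  shows "\<exists>x0\<in>X. x \<longlonglongrightarrow> x0 \<and> mix t0 x0 y0 = z0"
proof -
  have frozen: "(\<lambda>j. mix t0 (x j) y0) \<longlonglongrightarrow> z0"
    using x y y0 T t0 lim eq by (intro mix_tendsto_frozen) auto
  then have "Cauchy x"
    by (rule Cauchy_by_cancellation[OF x y0 t0 LIMSEQ_imp_Cauchy])
  then obtain x0 where x0: "x0 \<in> X" "x \<longlonglongrightarrow> x0"
    using completeE[OF assms(1)] x by blast
  have "(\<lambda>j. mix t0 (x j) y0) \<longlonglongrightarrow> mix t0 x0 y0"
  proof (rule tendsto_dist_bound)
    show "(\<lambda>j. t0 * dist (x j) x0) \<longlonglongrightarrow> 0"
      using x0(2) by (intro tendsto_mult_right_zero) (simp add: tendsto_dist_iff[symmetric])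
    show "dist (mix t0 (x j) y0) (mix t0 x0 y0) \<le> t0 * dist (x j) x0" for j
      using x x0 y0 t0 by (intro mix_dist_left) auto
  qed
  then have "mix t0 x0 y0 = z0" using frozen by (rule LIMSEQ_unique)
  with x0 show ?thesis by blast
qed

lemma plane_layer_limit:
  assumes "complete X" and xs: "xs \<in> Xpow X n" and a: "0 < a"
    and x: "\<And>j. x j \<in> X"
    and \<mu>s: "\<And>j. \<mu>s j \<in> Prob n" and \<nu>s: "\<And>j. \<nu>s j \<in> Prob n" and ts: "\<And>j. a \<le> ts j" "\<And>j. ts j \<le> 1"
    and eq: "\<And>j. mix (ts j) (x j) (gamma n (\<mu>s j) xs) = gamma n (\<nu>s j) xs"
    and \<mu>0: "\<mu>0 \<in> Prob n" and \<nu>0: "\<nu>0 \<in> Prob n" and t0: "a \<le> t0" "t0 \<le> 1"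
    and lim: "\<mu>s \<longlonglongrightarrow> \<mu>0" "\<nu>s \<longlonglongrightarrow> \<nu>0" "ts \<longlonglongrightarrow> t0"
  shows "\<exists>x0\<in>plane_layer X gamma n xs a. x \<longlonglongrightarrow> x0"
proof -
  have "(\<lambda>j. gamma n (\<mu>s j) xs) \<longlonglongrightarrow> gamma n \<mu>0 xs" "(\<lambda>j. gamma n (\<nu>s j) xs) \<longlonglongrightarrow> gamma n \<nu>0 xs"
    using xs \<mu>s \<mu>0 \<nu>s \<nu>0 lim by (auto intro: gamma_weight_tendsto)
  moreover have "gamma n (\<mu>s j) xs \<in> X" "0 \<le> ts j" for j
    using xs \<mu>s ts(1)[of j] a by (auto intro: gamma_in)
  moreover have "gamma n \<mu>0 xs \<in> X" "0 < t0"
    using xs \<mu>0 a t0(1) by (auto intro: gamma_in)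
  ultimately obtain x0 where "x0 \<in> X" "x \<longlonglongrightarrow> x0" "mix t0 x0 (gamma n \<mu>0 xs) = gamma n \<nu>0 xs"
    using mix_equation_limit[OF assms(1) x _ _ _ ts(2) _ t0(2) lim(3) _ _ eq] by blast
  with \<mu>0 \<nu>0 t0 show ?thesis unfolding plane_layer_def by blast
qed

text \<open>Each layer with \<open>a > 0\<close> is compact: along a subsequence the parameters converge
  by compactness of \<open>Prob n \<times> Prob n \<times> [a, 1]\<close>.\<close>

lemma compact_plane_layer:
  assumes "complete X" and xs: "xs \<in> Xpow X n" and a: "0 < a"
  shows "compact (plane_layer X gamma n xs a)"
  unfolding compact_eq_seq_compact_metric seq_compact_def
proof (intro allI impI)
  fix f :: "nat \<Rightarrow> 'a" assume f: "\<forall>j. f j \<in> plane_layer X gamma n xs a"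
  define Q where "Q = Prob n \<times> Prob n \<times> {a..1}"
  have "\<exists>q. q \<in> Q \<and> mix (snd (snd q)) (f j) (gamma n (fst q) xs) = gamma n (fst (snd q)) xs"
    for j
  proof -
    from f obtain \<mu> \<nu> t where "\<mu> \<in> Prob n" "\<nu> \<in> Prob n" "a \<le> t" "t \<le> 1"
      "mix t (f j) (gamma n \<mu> xs) = gamma n \<nu> xs"
      unfolding plane_layer_def by blast
    then show ?thesis by (intro exI[of _ "(\<mu>, \<nu>, t)"]) (simp add: Q_def)
  qed
  then obtain q :: "nat \<Rightarrow> (nat \<Rightarrow> real) \<times> (nat \<Rightarrow> real) \<times> real"
    where q: "\<And>j. q j \<in> Q"
    "\<And>j. mix (snd (snd (q j))) (f j) (gamma n (fst (q j)) xs) = gamma n (fst (snd (q j))) xs"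
    by metis
  have "compact Q" unfolding Q_def by (intro compact_Times compact_Prob compact_Icc)
  then obtain q0 and r :: "nat \<Rightarrow> nat"
    where q0: "q0 \<in> Q" and r: "strict_mono r" and "(q \<circ> r) \<longlonglongrightarrow> q0"
    using compact_imp_seq_compact seq_compactE q(1) by metis
  then have q_lim: "(\<lambda>j. q (r j)) \<longlonglongrightarrow> q0" by (simp add: o_def)
  obtain \<mu>0 \<nu>0 t0 where q0_eq: "q0 = (\<mu>0, \<nu>0, t0)" by (cases q0)
  have Q_j: "fst (q j) \<in> Prob n" "fst (snd (q j)) \<in> Prob n" "a \<le> snd (snd (q j))"
    "snd (snd (q j)) \<le> 1" for j
    using q(1)[of j] by (auto simp: Q_def)
  have "f j \<in> X" for j using f unfolding plane_layer_def by blast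
  then have "\<exists>x0\<in>plane_layer X gamma n xs a. (\<lambda>j. f (r j)) \<longlonglongrightarrow> x0"
    using Q_j q(2) q0 tendsto_fst[OF q_lim] tendsto_fst[OF tendsto_snd[OF q_lim]]
      tendsto_snd[OF tendsto_snd[OF q_lim]]
    by (intro plane_layer_limit[OF assms, of "\<lambda>j. f (r j)" "\<lambda>j. fst (q (r j))"
          "\<lambda>j. fst (snd (q (r j)))" "\<lambda>j. snd (snd (q (r j)))" \<mu>0 \<nu>0 t0])
      (auto simp: Q_def q0_eq)
  with r show "\<exists>l\<in>plane_layer X gamma n xs a. \<exists>r. strict_mono r \<and> (f \<circ> r) \<longlonglongrightarrow> l"
    by (auto simp: o_def)
qed

end

theorem lemma2p6:
  fixes X :: "'a::metric_space set"
    and gamma :: "nat \<Rightarrow> (nat \<Rightarrow> real) \<Rightarrow> (nat \<Rightarrow> 'a) \<Rightarrow> 'a"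
    and n :: nat and xs :: "nat \<Rightarrow> 'a"
  assumes "bounded X" and "complete X"
    and "convex_like X gamma"
    and "xs \<in> Xpow X n" and "inj_on xs {..<n}"
  shows "sigma_compact (cl_plane X gamma n xs)
         \<and> separable_space (top_of_set (cl_plane X gamma n xs))"
proof -
  have "compact (plane_layer X gamma n xs (1 / real (Suc k)))" for k
    using compact_plane_layer[OF assms(3,2,4)] by simp
  then have "sigma_compact (cl_plane X gamma n xs)"
    unfolding sigma_compact_def cl_plane_eq_Union_layers
    by (intro exI[of _ "\<lambda>k. plane_layer X gamma n xs (1 / real (Suc k))"]) simp
  then show ?thesis using sigma_compact_imp_separable by blast
qed

end
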